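(* Let $n\ge1$ and let $\mathcal T\in\mathbf{Rel}^n\mathbf{Cat}$ be such that its ambient category $a\mathcal T$ is a poset with a terminal object. Then for every $X\in\mathrm{s}^n\mathcal S$ the canonical map $$\operatorname{colim}_{\Delta X}\operatorname{map}(\mathcal T,\Delta_{\mathrm{rel}}F)\to\operatorname{map}(\mathcal T,\Delta_{\mathrm{rel}}X)$$ is an isomorphism (bijection of sets).
   Context: An $n$-relative category $\mathcal C=(a\mathcal C,v_1\mathcal C,\dots,v_n\mathcal C,w\mathcal C)$ consists of a category $a\mathcal C$ and subcategories $v_1\mathcal C,\dots,v_n\mathcal C,w\mathcal C\subset a\mathcal C$, each containing all objects, with $w\mathcal C\subset v_i\mathcal C$ for all $i$, such that every map of $a\mathcal C$ is a finite composite of maps in the $v_i\mathcal C$, and every relation in $a\mathcal C$ follows from commutativity of squares $y_2x_1=x_2y_1$ with $x_1,x_2\in v_i\mathcal C$, $y_1,y_2\in v_j\mathcal C$. $\mathbf{Rel}^n\mathbf{Cat}$ is the category of small $n$-relative categories and functors of ambient categories preserving $w$ and each $v_i$; $\operatorname{map}(\mathcal C,\mathcal D)$ denotes the set of maps $\mathcal C\to\mathcal D$ in $\mathbf{Rel}^n\mathbf{Cat}$. $\mathrm{s}^n\mathcal S$ is the category of $(n+1)$-simplicial sets with standard multisimplices $\Delta[p_n,\dots,p_1,q]$; $\Delta[-]$ is their full subcategory (maps = tuples of order-preserving maps $\mathbf p_i\to\mathbf p_i'$, $\mathbf q\to\mathbf q'$, where $\mathbf p$ is the poset $0\to\cdots\to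 p$). $\Delta X=\Delta[-]\downarrow X$, and $F\colon\Delta X\to\mathrm{s}^n\mathcal S$ sends $\Delta[p_n,\dots,p_1,q]\to X$ to $\Delta[p_n,\dots,p_1,q]$. $\Delta_{\mathrm{rel}}[-]$ is the $n$-relative category with ambient category $\Delta[-]$, $v_i$ the maps whose component $\mathbf p_i\to\mathbf p_i'$ sends $p_i$ to $p_i'$, and $w=\bigcap_iv_i$. For $Y\in\mathrm{s}^n\mathcal S$, $\Delta_{\mathrm{rel}}Y=\Delta_{\mathrm{rel}}[-]\downarrow Y$ is the $n$-relative over category (ambient category $\Delta[-]\downarrow Y$; a map lies in $v_i$ or $w$ iff its underlying map in $\Delta[-]$ does), functorial in $Y$. *)

theory Defs
  imports Main
begin

record ('o, 'm) cat =
  Ob   :: "'o set"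
  Mor  :: "'m set"
  Dom  :: "'m \<Rightarrow> 'o"
  Cod  :: "'m \<Rightarrow> 'o"
  Id   :: "'o \<Rightarrow> 'm"
  Comp :: "'m \<Rightarrow> 'm \<Rightarrow> 'm"   (* Comp g f = g o f *)

record ('o, 'm) relcat = "('o, 'm) cat" +
  V :: "nat \<Rightarrow> 'm set"      (* V i = v_i, used for 1 <= i <= n *)
  W :: "'m set"

definition is_cat :: "('o, 'm, 'e) cat_scheme \<Rightarrow> bool" where
  "is_cat C \<longleftrightarrow>
     (\<forall>f\<in>Mor C. Dom C f \<in> Ob C \<and> Cod C f \<in> Ob C) \<and>
     (\<forall>a\<in>Ob C. Id C a \<in> Mor C \<and> Dom C (Id C a) = a \<and> Cod C (Id C a) = a) \<and>
     (\<forall>f\<in>Mor C. \<forall>g\<in>Mor C. Cod C f = Dom C g \<longrightarrow>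
        Comp C g f \<in> Mor C \<and> Dom C (Comp C g f) = Dom C f \<and> Cod C (Comp C g f) = Cod C g) \<and>
     (\<forall>f\<in>Mor C. Comp C (Id C (Cod C f)) f = f \<and> Comp C f (Id C (Dom C f)) = f) \<and>
     (\<forall>f\<in>Mor C. \<forall>g\<in>Mor C. \<forall>h\<in>Mor C. Cod C f = Dom C g \<and> Cod C g = Dom C h \<longrightarrow>
        Comp C h (Comp C g f) = Comp C (Comp C h g) f)"

definition is_wide_subcat :: "('o, 'm, 'e) cat_scheme \<Rightarrow> 'm set \<Rightarrow> bool" where
  "is_wide_subcat C S \<longleftrightarrow> S \<subseteq> Mor C \<and> (\<forall>a\<in>Ob C. Id C a \<in> S) \<and>
     (\<forall>f\<in>S. \<forall>g\<in>S. Cod C f = Dom C g \<longrightarrow> Comp C g f \<in> S)"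

fun valid_path :: "nat \<Rightarrow> ('o, 'm, 'e) relcat_scheme \<Rightarrow> 'o \<Rightarrow> (nat \<times> 'm) list \<Rightarrow> bool" where
  "valid_path n C a [] \<longleftrightarrow> a \<in> Ob C"
| "valid_path n C a ((i, f) # ps) \<longleftrightarrow>
     a \<in> Ob C \<and> i \<in> {1..n} \<and> f \<in> V C i \<and> Dom C f = a \<and> valid_path n C (Cod C f) ps"

fun path_end :: "('o, 'm, 'e) relcat_scheme \<Rightarrow> 'o \<Rightarrow> (nat \<times> 'm) list \<Rightarrow> 'o" where
  "path_end C a [] = a"
| "path_end C a ((i, f) # ps) = path_end C (Cod C f) ps"

fun path_comp :: "('o, 'm, 'e) relcat_scheme \<Rightarrow> 'o \<Rightarrow> (nat \<times> 'm) list \<Rightarrow> 'm" where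
  "path_comp C a [] = Id C a"
| "path_comp C a ((i, f) # ps) = Comp C (path_comp C (Cod C f) ps) f"

inductive sq_step :: "nat \<Rightarrow> ('o, 'm, 'e) relcat_scheme \<Rightarrow> 'o \<Rightarrow> (nat \<times> 'm) list \<Rightarrow> (nat \<times> 'm) list \<Rightarrow> bool"
  for n C where
  id_rule: "a \<in> Ob C \<Longrightarrow> i \<in> {1..n} \<Longrightarrow> sq_step n C a [(i, Id C a)] []"
| square: "i \<in> {1..n} \<Longrightarrow> j \<in> {1..n} \<Longrightarrow> a \<in> Ob C \<Longrightarrow>
    x1 \<in> V C i \<Longrightarrow> x2 \<in> V C i \<Longrightarrow> y1 \<in> V C j \<Longrightarrow> y2 \<in> V C j \<Longrightarrow>
    Dom C x1 = a \<Longrightarrow> Dom C y1 = a \<Longrightarrow> Cod C x1 = Dom C y2 \<Longrightarrow> Cod C y1 = Dom C x2 \<Longrightarrow>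
    Cod C y2 = Cod C x2 \<Longrightarrow> Comp C y2 x1 = Comp C x2 y1 \<Longrightarrow>
    sq_step n C a [(i, x1), (j, y2)] [(j, y1), (i, x2)]"
| in_context: "sq_step n C (path_end C a u) l l' \<Longrightarrow> valid_path n C a (u @ l @ v) \<Longrightarrow>
    sq_step n C a (u @ l @ v) (u @ l' @ v)"

definition is_relcat :: "nat \<Rightarrow> ('o, 'm, 'e) relcat_scheme \<Rightarrow> bool" where
  "is_relcat n C \<longleftrightarrow> is_cat C \<and>
     (\<forall>i\<in>{1..n}. is_wide_subcat C (V C i)) \<and> is_wide_subcat C (W C) \<and>
     (\<forall>i\<in>{1..n}. W C \<subseteq> V C i) \<and>
     (\<forall>f\<in>Mor C. \<exists>ps. valid_path n C (Dom C f) ps \<and> path_comp C (Dom C f) ps = f) \<and>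
     (\<forall>a\<in>Ob C. \<forall>ps qs. valid_path n C a ps \<and> valid_path n C a qs \<and>
        path_end C a ps = path_end C a qs \<and> path_comp C a ps = path_comp C a qs \<longrightarrow>
        equivclp (sq_step n C a) ps qs)"

definition is_poset_cat :: "('o, 'm, 'e) cat_scheme \<Rightarrow> bool" where
  "is_poset_cat C \<longleftrightarrow>
     (\<forall>f\<in>Mor C. \<forall>g\<in>Mor C. Dom C f = Dom C g \<and> Cod C f = Cod C g \<longrightarrow> f = g) \<and>
     (\<forall>f\<in>Mor C. \<forall>g\<in>Mor C. Dom C f = Cod C g \<and> Cod C f = Dom C g \<longrightarrow> Dom C f = Cod C f)"

definition has_terminal :: "('o, 'm, 'e) cat_scheme \<Rightarrow> bool" where
  "has_terminal C \<longleftrightarrow> (\<exists>t\<in>Ob C. \<forall>a\<in>Ob C. \<exists>!f. f \<in> Mor C \<and> Dom C f = a \<and> Cod C f = t)"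

text \<open>map(C, D): maps in Rel^n Cat (functors preserving W and each V_i),
  made extensional outside the objects/morphisms of C.\<close>

definition relmaps :: "nat \<Rightarrow> ('o, 'm, 'e) relcat_scheme \<Rightarrow> ('p, 'n, 'f) relcat_scheme
    \<Rightarrow> (('o \<Rightarrow> 'p) \<times> ('m \<Rightarrow> 'n)) set" where
  "relmaps n C D = {(Fo, Fm).
     (\<forall>a\<in>Ob C. Fo a \<in> Ob D) \<and>
     (\<forall>f\<in>Mor C. Fm f \<in> Mor D \<and> Dom D (Fm f) = Fo (Dom C f) \<and> Cod D (Fm f) = Fo (Cod C f)) \<and>
     (\<forall>a\<in>Ob C. Fm (Id C a) = Id D (Fo a)) \<and>
     (\<forall>f\<in>Mor C. \<forall>g\<in>Mor C. Cod C f = Dom C g \<longrightarrow> Fm (Comp C g f) = Comp D (Fm g) (Fm f)) \<and>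
     (\<forall>i\<in>{1..n}. \<forall>f\<in>V C i. Fm f \<in> V D i) \<and>
     (\<forall>f\<in>W C. Fm f \<in> W D) \<and>
     (\<forall>a. a \<notin> Ob C \<longrightarrow> Fo a = undefined) \<and>
     (\<forall>f. f \<notin> Mor C \<longrightarrow> Fm f = undefined)}"

definition fcomp :: "('o, 'm, 'e) cat_scheme \<Rightarrow> (('p \<Rightarrow> 'q) \<times> ('n \<Rightarrow> 'r))
    \<Rightarrow> (('o \<Rightarrow> 'p) \<times> ('m \<Rightarrow> 'n)) \<Rightarrow> (('o \<Rightarrow> 'q) \<times> ('m \<Rightarrow> 'r))" where
  "fcomp C H F = ((\<lambda>a. if a \<in> Ob C then fst H (fst F a) else undefined),
                  (\<lambda>f. if f \<in> Mor C then snd H (snd F f) else undefined))"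

text \<open>A multi-index (p_n,...,p_1,q) is the list [q, p_1, ..., p_n] of length n+1
  (position 0 is q, position i is p_i).  A map of Delta[-] from p to p' is a list of
  n+1 order-preserving maps, the k-th one  {0..p!k} -> {0..p'!k}  being represented by
  the list of its values.\<close>

definition midx :: "nat \<Rightarrow> nat list \<Rightarrow> bool" where
  "midx n p \<longleftrightarrow> length p = Suc n"

definition dmor :: "nat \<Rightarrow> nat list \<Rightarrow> nat list \<Rightarrow> nat list list \<Rightarrow> bool" where
  "dmor n p p' fs \<longleftrightarrow> midx n p \<and> midx n p' \<and> length fs = Suc n \<and>
     (\<forall>k < Suc n. length (fs ! k) = Suc (p ! k) \<and> sorted (fs ! k) \<and>
        (\<forall>v \<in> set (fs ! k). v \<le> p' ! k))"

definition did :: "nat list \<Rightarrow> nat list list" where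
  "did p = map (\<lambda>m. [0..<Suc m]) p"

definition dcomp :: "nat list list \<Rightarrow> nat list list \<Rightarrow> nat list list" where
  "dcomp gs fs = map2 (\<lambda>g f. map (\<lambda>j. g ! j) f) gs fs"   (* gs o fs *)

record 'x ssset =
  Xs  :: "nat list \<Rightarrow> 'x set"
  act :: "nat list \<Rightarrow> nat list \<Rightarrow> nat list list \<Rightarrow> 'x \<Rightarrow> 'x"  (* act p p' alpha : X_{p'} -> X_p *)

definition is_ssset :: "nat \<Rightarrow> 'x ssset \<Rightarrow> bool" where
  "is_ssset n X \<longleftrightarrow>
     (\<forall>p p' fs x. dmor n p p' fs \<and> x \<in> Xs X p' \<longrightarrow> act X p p' fs x \<in> Xs X p) \<and>
     (\<forall>p x. midx n p \<and> x \<in> Xs X p \<longrightarrow> act X p p (did p) x = x) \<and>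
     (\<forall>p p' p'' f g x. dmor n p p' f \<and> dmor n p' p'' g \<and> x \<in> Xs X p'' \<longrightarrow>
        act X p p'' (dcomp g f) x = act X p p' f (act X p' p'' g x))"

definition yoneda :: "nat \<Rightarrow> nat list \<Rightarrow> nat list list ssset" where
  "yoneda n p = \<lparr> Xs = (\<lambda>p'. {fs. dmor n p' p fs}), act = (\<lambda>a b alpha beta. dcomp beta alpha) \<rparr>"

type_synonym 'x dobj = "nat list \<times> 'x"
type_synonym 'x dmorph = "'x dobj \<times> 'x dobj \<times> nat list list"

definition delta_rel :: "nat \<Rightarrow> 'x ssset \<Rightarrow> ('x dobj, 'x dmorph) relcat" where
  "delta_rel n Y =
    (let Obs = {(p, y). midx n p \<and> y \<in> Xs Y p};
         Ms = {((p, y), (p', y'), alpha). (p, y) \<in> Obs \<and> (p', y') \<in> Obs \<and>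
                dmor n p p' alpha \<and> act Y p p' alpha y' = y};
         Vi = (\<lambda>i. {m \<in> Ms. (snd (snd m) ! i) ! (fst (fst m) ! i) = fst (fst (snd m)) ! i})
     in \<lparr> Ob = Obs, Mor = Ms,
          Dom = (\<lambda>m. fst m), Cod = (\<lambda>m. fst (snd m)),
          Id = (\<lambda>a. (a, a, did (fst a))),
          Comp = (\<lambda>g f. (fst f, fst (snd g), dcomp (snd (snd g)) (snd (snd f)))),
          V = Vi,
          W = {m \<in> Ms. \<forall>i\<in>{1..n}. m \<in> Vi i} \<rparr>)"

definition drel_fun :: "(nat list \<Rightarrow> 'y \<Rightarrow> 'z) \<Rightarrow> (('y dobj \<Rightarrow> 'z dobj) \<times> ('y dmorph \<Rightarrow> 'z dmorph))" where
  "drel_fun f = ((\<lambda>(p, y). (p, f p y)),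
                 (\<lambda>((p, y), (p', y'), alpha). ((p, f p y), (p', f p' y'), alpha)))"

text \<open>Elements of the disjoint union of map(T, Delta_rel F(sigma)) over the objects
  sigma = (p, x) of Delta X (x in X_p corresponds to Delta[p] -> X).\<close>

definition colim_elems :: "nat \<Rightarrow> ('o, 'm, 'e) relcat_scheme \<Rightarrow> 'x ssset
   \<Rightarrow> ((nat list \<times> 'x) \<times> (('o \<Rightarrow> nat list list dobj) \<times> ('m \<Rightarrow> nat list list dmorph))) set" where
  "colim_elems n T X = {((p, x), phi). midx n p \<and> x \<in> Xs X p \<and>
       phi \<in> relmaps n T (delta_rel n (yoneda n p))}"

text \<open>Generating relation: for a map gamma : (p, x) -> (p', x') of Delta X
  (i.e. gamma : p -> p' with gamma^* x' = x), phi is related to Delta_rel(gamma) o phi.\<close>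

definition colim_gen :: "nat \<Rightarrow> ('o, 'm, 'e) relcat_scheme \<Rightarrow> 'x ssset
   \<Rightarrow> (((nat list \<times> 'x) \<times> (('o \<Rightarrow> nat list list dobj) \<times> ('m \<Rightarrow> nat list list dmorph))) \<times>
       ((nat list \<times> 'x) \<times> (('o \<Rightarrow> nat list list dobj) \<times> ('m \<Rightarrow> nat list list dmorph)))) set" where
  "colim_gen n T X = {(((p, x), phi), ((p', x'), psi)).
       ((p, x), phi) \<in> colim_elems n T X \<and> ((p', x'), psi) \<in> colim_elems n T X \<and>
       (\<exists>gamma. dmor n p p' gamma \<and> act X p p' gamma x' = x \<and>
          psi = fcomp T (drel_fun (\<lambda>q beta. dcomp gamma beta)) phi)}"

definition colim_rel where
  "colim_rel n T X = (colim_gen n T X \<union> (colim_gen n T X)\<inverse>)\<^sup>*"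

definition colim_set where
  "colim_set n T X = colim_elems n T X // colim_rel n T X"

text \<open>Canonical map on representatives: phi |-> Delta_rel(x) o phi.\<close>

definition canon :: "nat \<Rightarrow> ('o, 'm, 'e) relcat_scheme \<Rightarrow> 'x ssset
   \<Rightarrow> ((nat list \<times> 'x) \<times> (('o \<Rightarrow> nat list list dobj) \<times> ('m \<Rightarrow> nat list list dmorph)))
   \<Rightarrow> (('o \<Rightarrow> 'x dobj) \<times> ('m \<Rightarrow> 'x dmorph))" where
  "canon n T X e = (case e of ((p, x), phi) \<Rightarrow>
       fcomp T (drel_fun (\<lambda>q beta. act X q p beta x)) phi)"

definition canon_colim where
  "canon_colim n T X = (\<lambda>c. the_elem (canon n T X ` c))"

end

theory Submission
  imports Defs
begin

text \<open>Let \<open>t\<close> be terminal in \<open>a\<T>\<close> and let \<open>\<phi> : \<T> \<rightarrow> \<Delta>\<^sub>r\<^sub>e\<^sub>l X\<close> send \<open>t\<close> to \<open>(p, x)\<close>.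
  For every object \<open>a\<close>, the image of the unique arrow \<open>a \<rightarrow> t\<close> is a simplicial operator
  \<open>\<alpha>\<^sub>a : q\<^sub>a \<rightarrow> p\<close> with \<open>\<phi>(a) = (q\<^sub>a, \<alpha>\<^sub>a\<^sup>* x)\<close>.  By uniqueness of arrows into \<open>t\<close>, sending
  \<open>a\<close> to \<open>(q\<^sub>a, \<alpha>\<^sub>a)\<close> is functorial, so it lifts \<open>\<phi>\<close> through \<open>\<Delta>\<^sub>r\<^sub>e\<^sub>l \<Delta>[p] \<rightarrow> \<Delta>\<^sub>r\<^sub>e\<^sub>l X\<close>;
  this is a section of the canonical map.  Conversely, an element \<open>\<psi> : \<T> \<rightarrow> \<Delta>\<^sub>r\<^sub>e\<^sub>l \<Delta>[p]\<close>
  of the colimit with \<open>\<psi>(t) = (q, \<beta>)\<close> is the image under \<open>\<beta> : \<Delta>[q] \<rightarrow> \<Delta>[p]\<close> of the lift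
  of its canonical image, hence equal to that lift in the colimit.\<close>

lemma bij_betw_quotient_by_section:
  assumes r: "equiv UNIV r"
    and resp: "\<And>x y. (x, y) \<in> r \<Longrightarrow> f x = f y"
    and into: "\<And>x. x \<in> A \<Longrightarrow> f x \<in> B"
    and right_inv: "\<And>y. y \<in> B \<Longrightarrow> s y \<in> A \<and> f (s y) = y"
    and retract: "\<And>x. x \<in> A \<Longrightarrow> (x, s (f x)) \<in> r"
  shows "bij_betw (\<lambda>c. the_elem (f ` c)) (A // r) B"
proof -
  have on_class: "the_elem (f ` r``{x}) = f x" for x
  proof -
    have "x \<in> r``{x}" using equiv_class_self[OF r UNIV_I] .
    moreover have "f y = f x" if "y \<in> r``{x}" for y
      using that resp by (simp add: Image_singleton_iff)
    ultimately have "f ` r``{x} = {f x}" by blast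
    then show ?thesis by simp
  qed
  have "inj_on (\<lambda>c. the_elem (f ` c)) (A // r)"
  proof (rule inj_onI)
    fix c d assume "c \<in> A // r" "d \<in> A // r" and eq: "the_elem (f ` c) = the_elem (f ` d)"
    then obtain x y where c: "c = r``{x}" and x: "x \<in> A" and d: "d = r``{y}" and y: "y \<in> A"
      by (auto elim!: quotientE)
    have "f x = f y" using eq by (simp add: c d on_class)
    then have "(x, s (f x)) \<in> r" "(y, s (f x)) \<in> r"
      using retract[OF x] retract[OF y] by simp_all
    then have "(x, y) \<in> r"
      using r unfolding equiv_def by (meson symD transD)
    then show "c = d"
      using r by (simp add: c d equiv_class_eq_iff)
  qed
  moreover have "(\<lambda>c. the_elem (f ` c)) ` (A // r) = B"
  proof
    show "(\<lambda>c. the_elem (f ` c)) ` (A // r) \<subseteq> B"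
      using into on_class by (auto elim!: quotientE)
    show "B \<subseteq> (\<lambda>c. the_elem (f ` c)) ` (A // r)"
    proof
      fix y assume "y \<in> B"
      then have "r``{s y} \<in> A // r" "the_elem (f ` r``{s y}) = y"
        using right_inv on_class by (auto intro: quotientI)
      then show "y \<in> (\<lambda>c. the_elem (f ` c)) ` (A // r)" by (metis image_eqI)
    qed
  qed
  ultimately show ?thesis unfolding bij_betw_def ..
qed

lemma relcatD:
  assumes "is_relcat n T"
  shows relcat_V_Mor: "i \<in> {1..n} \<Longrightarrow> V T i \<subseteq> Mor T"
    and relcat_W_Mor: "W T \<subseteq> Mor T"
    and relcat_Dom_Cod: "f \<in> Mor T \<Longrightarrow> Dom T f \<in> Ob T \<and> Cod T f \<in> Ob T"
    and relcat_Id: "a \<in> Ob T \<Longrightarrow> Id T a \<in> Mor T \<and> Dom T (Id T a) = a \<and> Cod T (Id T a) = a"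
    and relcat_Comp: "f \<in> Mor T \<Longrightarrow> g \<in> Mor T \<Longrightarrow> Cod T f = Dom T g \<Longrightarrow>
        Comp T g f \<in> Mor T \<and> Dom T (Comp T g f) = Dom T f \<and> Cod T (Comp T g f) = Cod T g"
proof -
  have cat: "is_cat T" and V: "\<forall>i\<in>{1..n}. is_wide_subcat T (V T i)" and W: "is_wide_subcat T (W T)"
    using assms unfolding is_relcat_def by blast+
  show "i \<in> {1..n} \<Longrightarrow> V T i \<subseteq> Mor T" using V unfolding is_wide_subcat_def by blast
  show "W T \<subseteq> Mor T" using W unfolding is_wide_subcat_def by blast
  show "f \<in> Mor T \<Longrightarrow> Dom T f \<in> Ob T \<and> Cod T f \<in> Ob T"
    and "a \<in> Ob T \<Longrightarrow> Id T a \<in> Mor T \<and> Dom T (Id T a) = a \<and> Cod T (Id T a) = a"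
    and "f \<in> Mor T \<Longrightarrow> g \<in> Mor T \<Longrightarrow> Cod T f = Dom T g \<Longrightarrow>
        Comp T g f \<in> Mor T \<and> Dom T (Comp T g f) = Dom T f \<and> Cod T (Comp T g f) = Cod T g"
    using cat unfolding is_cat_def by blast+
qed

lemma relmapsD:
  assumes "(Fo, Fm) \<in> relmaps n C D"
  shows relmaps_Ob: "a \<in> Ob C \<Longrightarrow> Fo a \<in> Ob D"
    and relmaps_Mor: "f \<in> Mor C \<Longrightarrow> Fm f \<in> Mor D"
    and relmaps_Dom: "f \<in> Mor C \<Longrightarrow> Dom D (Fm f) = Fo (Dom C f)"
    and relmaps_Cod: "f \<in> Mor C \<Longrightarrow> Cod D (Fm f) = Fo (Cod C f)"
    and relmaps_Id: "a \<in> Ob C \<Longrightarrow> Fm (Id C a) = Id D (Fo a)"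
    and relmaps_Comp: "f \<in> Mor C \<Longrightarrow> g \<in> Mor C \<Longrightarrow> Cod C f = Dom C g \<Longrightarrow>
        Fm (Comp C g f) = Comp D (Fm g) (Fm f)"
    and relmaps_V: "i \<in> {1..n} \<Longrightarrow> f \<in> V C i \<Longrightarrow> Fm f \<in> V D i"
    and relmaps_W: "f \<in> W C \<Longrightarrow> Fm f \<in> W D"
    and relmaps_Ob_undefined: "a \<notin> Ob C \<Longrightarrow> Fo a = undefined"
    and relmaps_Mor_undefined: "f \<notin> Mor C \<Longrightarrow> Fm f = undefined"
  using assms unfolding relmaps_def by simp_all

definition is_relfun :: "nat \<Rightarrow> ('o, 'm, 'e) relcat_scheme \<Rightarrow> ('p, 'n, 'f) relcat_scheme
    \<Rightarrow> ('o \<Rightarrow> 'p) \<times> ('m \<Rightarrow> 'n) \<Rightarrow> bool" where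
  "is_relfun n D D' H \<longleftrightarrow>
     (\<forall>a\<in>Ob D. fst H a \<in> Ob D') \<and>
     (\<forall>f\<in>Mor D. snd H f \<in> Mor D' \<and> Dom D' (snd H f) = fst H (Dom D f) \<and>
        Cod D' (snd H f) = fst H (Cod D f)) \<and>
     (\<forall>a\<in>Ob D. snd H (Id D a) = Id D' (fst H a)) \<and>
     (\<forall>f\<in>Mor D. \<forall>g\<in>Mor D. Cod D f = Dom D g \<longrightarrow> snd H (Comp D g f) = Comp D' (snd H g) (snd H f)) \<and>
     (\<forall>i\<in>{1..n}. \<forall>f\<in>V D i. snd H f \<in> V D' i) \<and> (\<forall>f\<in>W D. snd H f \<in> W D')"

lemma is_relfunD:
  assumes "is_relfun n D D' H"
  shows is_relfun_Ob: "a \<in> Ob D \<Longrightarrow> fst H a \<in> Ob D'"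
    and is_relfun_Mor: "f \<in> Mor D \<Longrightarrow> snd H f \<in> Mor D'"
    and is_relfun_Dom: "f \<in> Mor D \<Longrightarrow> Dom D' (snd H f) = fst H (Dom D f)"
    and is_relfun_Cod: "f \<in> Mor D \<Longrightarrow> Cod D' (snd H f) = fst H (Cod D f)"
    and is_relfun_Id: "a \<in> Ob D \<Longrightarrow> snd H (Id D a) = Id D' (fst H a)"
    and is_relfun_Comp: "f \<in> Mor D \<Longrightarrow> g \<in> Mor D \<Longrightarrow> Cod D f = Dom D g \<Longrightarrow>
        snd H (Comp D g f) = Comp D' (snd H g) (snd H f)"
    and is_relfun_V: "i \<in> {1..n} \<Longrightarrow> f \<in> V D i \<Longrightarrow> snd H f \<in> V D' i"
    and is_relfun_W: "f \<in> W D \<Longrightarrow> snd H f \<in> W D'"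
  using assms unfolding is_relfun_def by blast+

lemma relmaps_fcomp:
  assumes T: "is_relcat n T" and F: "F \<in> relmaps n T D" and H: "is_relfun n D D' H"
  shows "fcomp T H F \<in> relmaps n T D'"
proof -
  obtain Fo Fm where F_eq: "F = (Fo, Fm)" by fastforce
  note F = F[unfolded F_eq]
  show ?thesis
    unfolding F_eq fcomp_def relmaps_def mem_Collect_eq prod.case fst_conv snd_conv
  proof (intro conjI ballI allI impI)
    fix i f assume "i \<in> {1..n}" "f \<in> V T i"
    then show "(if f \<in> Mor T then snd H (Fm f) else undefined) \<in> V D' i"
      using relcat_V_Mor[OF T] relmaps_V[OF F] is_relfun_V[OF H] by auto
  next
    fix f assume "f \<in> W T"
    then show "(if f \<in> Mor T then snd H (Fm f) else undefined) \<in> W D'"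
      using relcat_W_Mor[OF T] relmaps_W[OF F] is_relfun_W[OF H] by auto
  qed (use relcatD[OF T] relmapsD[OF F] is_relfunD[OF H] in auto)
qed

lemma delta_rel_simps:
  "Ob (delta_rel n Y) = {(p, y). midx n p \<and> y \<in> Xs Y p}"
  "Dom (delta_rel n Y) m = fst m"
  "Cod (delta_rel n Y) m = fst (snd m)"
  "Id (delta_rel n Y) a = (a, a, did (fst a))"
  "Comp (delta_rel n Y) g f = (fst f, fst (snd g), dcomp (snd (snd g)) (snd (snd f)))"
  by (simp_all add: delta_rel_def Let_def)

lemma delta_rel_Mor_iff:
  "((p, y), (p', y'), \<alpha>) \<in> Mor (delta_rel n Y) \<longleftrightarrow>
     midx n p \<and> y \<in> Xs Y p \<and> midx n p' \<and> y' \<in> Xs Y p' \<and> dmor n p p' \<alpha> \<and> act Y p p' \<alpha> y' = y"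
  by (auto simp: delta_rel_def Let_def)

lemma delta_rel_V:
  "V (delta_rel n Y) i =
     {m \<in> Mor (delta_rel n Y). snd (snd m) ! i ! (fst (fst m) ! i) = fst (fst (snd m)) ! i}"
  by (simp add: delta_rel_def Let_def)

lemma delta_rel_W:
  "W (delta_rel n Y) =
     {m \<in> Mor (delta_rel n Y). \<forall>i\<in>{1..n}. snd (snd m) ! i ! (fst (fst m) ! i) = fst (fst (snd m)) ! i}"
  by (auto simp: delta_rel_def Let_def)

lemma delta_rel_Mor_Ob:
  assumes "m \<in> Mor (delta_rel n Y)"
  shows "fst m \<in> Ob (delta_rel n Y)" "fst (snd m) \<in> Ob (delta_rel n Y)"
  using assms by (auto simp: delta_rel_def Let_def)

lemma relmaps_delta_rel_endpoints:
  assumes "(Fo, Fm) \<in> relmaps n T (delta_rel n Y)" and "f \<in> Mor T"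
  shows "fst (Fm f) = Fo (Dom T f)" "fst (snd (Fm f)) = Fo (Cod T f)"
  using relmaps_Dom[OF assms] relmaps_Cod[OF assms] by (simp_all add: delta_rel_simps)

lemma relmaps_delta_rel_Mor_eq:
  assumes "(Fo, Fm) \<in> relmaps n T (delta_rel n Y)" and "f \<in> Mor T"
  shows "Fm f = (Fo (Dom T f), Fo (Cod T f), snd (snd (Fm f)))"
  using relmaps_Dom[OF assms] relmaps_Cod[OF assms] by (simp add: delta_rel_simps prod_eq_iff)

lemma drel_fun_apply:
  "fst (drel_fun f) a = (fst a, f (fst a) (snd a))"
  "snd (drel_fun f) m = (fst (drel_fun f) (fst m), fst (drel_fun f) (fst (snd m)), snd (snd m))"
  by (simp_all add: drel_fun_def split: prod.split)

lemma is_relfun_drel_fun: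
  assumes closed: "\<And>q y. midx n q \<Longrightarrow> y \<in> Xs Y q \<Longrightarrow> f q y \<in> Xs Z q"
    and natural: "\<And>q q' \<alpha> y. dmor n q q' \<alpha> \<Longrightarrow> y \<in> Xs Y q' \<Longrightarrow>
        act Z q q' \<alpha> (f q' y) = f q (act Y q q' \<alpha> y)"
  shows "is_relfun n (delta_rel n Y) (delta_rel n Z) (drel_fun f)"
proof -
  have "snd (drel_fun f) ((p, y), (p', y'), \<alpha>) \<in> Mor (delta_rel n Z)"
    if "((p, y), (p', y'), \<alpha>) \<in> Mor (delta_rel n Y)" for p y p' y' \<alpha>
    using that closed natural[of p p' \<alpha> y'] by (auto simp: drel_fun_apply delta_rel_Mor_iff)
  then have Mor: "snd (drel_fun f) m \<in> Mor (delta_rel n Z)" if "m \<in> Mor (delta_rel n Y)" for m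
    using that by (metis prod.collapse)
  show ?thesis
    unfolding is_relfun_def
    using Mor closed by (auto simp: drel_fun_apply delta_rel_simps delta_rel_V delta_rel_W)
qed

lemma is_sssetD:
  assumes "is_ssset n X"
  shows ssset_act_closed: "dmor n p p' \<alpha> \<Longrightarrow> x \<in> Xs X p' \<Longrightarrow> act X p p' \<alpha> x \<in> Xs X p"
    and ssset_act_dcomp: "dmor n p p' \<alpha> \<Longrightarrow> dmor n p' p'' \<beta> \<Longrightarrow> x \<in> Xs X p'' \<Longrightarrow>
        act X p p'' (dcomp \<beta> \<alpha>) x = act X p p' \<alpha> (act X p' p'' \<beta> x)"
  using assms unfolding is_ssset_def by blast+

lemma yoneda_simps:
  "Xs (yoneda n p) q = {\<alpha>. dmor n q p \<alpha>}"
  "act (yoneda n p) q q' \<alpha> \<beta> = dcomp \<beta> \<alpha>"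
  by (simp_all add: yoneda_def)

text \<open>The map \<open>\<Delta>[p] \<rightarrow> X\<close> classifying \<open>x \<in> X\<^sub>p\<close> (Yoneda), on the level of \<open>\<Delta>\<^sub>r\<^sub>e\<^sub>l\<close>.\<close>

lemma is_relfun_drel_fun_classifying:
  assumes X: "is_ssset n X" and x: "x \<in> Xs X p"
  shows "is_relfun n (delta_rel n (yoneda n p)) (delta_rel n X) (drel_fun (\<lambda>q \<beta>. act X q p \<beta> x))"
  by (rule is_relfun_drel_fun)
    (use ssset_act_closed[OF X] ssset_act_dcomp[OF X] x in \<open>simp_all add: yoneda_simps\<close>)

lemma canon_in_relmaps:
  assumes T: "is_relcat n T" and X: "is_ssset n X" and e: "e \<in> colim_elems n T X"
  shows "canon n T X e \<in> relmaps n T (delta_rel n X)"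
proof -
  obtain p x \<phi> where e_eq: "e = ((p, x), \<phi>)" by (metis prod.collapse)
  have x: "x \<in> Xs X p" and \<phi>: "\<phi> \<in> relmaps n T (delta_rel n (yoneda n p))"
    using e by (simp_all add: e_eq colim_elems_def)
  show ?thesis
    unfolding e_eq canon_def prod.case
    by (rule relmaps_fcomp[OF T \<phi> is_relfun_drel_fun_classifying[OF X x]])
qed

lemma canon_colim_gen:
  assumes X: "is_ssset n X" and gen: "(e, e') \<in> colim_gen n T X"
  shows "canon n T X e = canon n T X e'"
proof -
  obtain p x Fo Fm p' x' \<psi> where e_eq: "e = ((p, x), (Fo, Fm))" and e'_eq: "e' = ((p', x'), \<psi>)"
    by (metis prod.collapse)
  from gen obtain \<gamma> where \<gamma>: "dmor n p p' \<gamma>" and x_eq: "act X p p' \<gamma> x' = x"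
    and \<psi>: "\<psi> = fcomp T (drel_fun (\<lambda>q \<beta>. dcomp \<gamma> \<beta>)) (Fo, Fm)"
    and x': "x' \<in> Xs X p'" and F: "(Fo, Fm) \<in> relmaps n T (delta_rel n (yoneda n p))"
    using gen by (auto simp: e_eq e'_eq colim_gen_def colim_elems_def)
  have act_dcomp: "act X q p' (dcomp \<gamma> \<beta>) x' = act X q p \<beta> x" if "dmor n q p \<beta>" for q \<beta>
    using ssset_act_dcomp[OF X that \<gamma> x'] x_eq by simp
  let ?G = "drel_fun (\<lambda>q \<beta>. act X q p \<beta> x)" and ?G' = "drel_fun (\<lambda>q \<beta>. act X q p' \<beta> x')"
    and ?H = "drel_fun (\<lambda>q \<beta>. dcomp \<gamma> \<beta>)"
  have ob: "fst ?G' (fst ?H a) = fst ?G a" if "a \<in> Ob (delta_rel n (yoneda n p))" for a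
    using that act_dcomp by (auto simp: drel_fun_apply delta_rel_simps yoneda_simps)
  have mor: "snd ?G' (snd ?H m) = snd ?G m" if "m \<in> Mor (delta_rel n (yoneda n p))" for m
    using delta_rel_Mor_Ob[OF that] by (simp add: ob drel_fun_apply(2))
  show ?thesis
    unfolding e_eq e'_eq canon_def \<psi> fcomp_def
    using ob[OF relmaps_Ob[OF F]] mor[OF relmaps_Mor[OF F]] by (auto simp: fun_eq_iff)
qed

lemma canon_colim_rel:
  assumes X: "is_ssset n X" and "(e, e') \<in> colim_rel n T X"
  shows "canon n T X e = canon n T X e'"
  using assms(2) unfolding colim_rel_def
proof (induction rule: rtrancl_induct)
  case (step e' e'')
  then have "canon n T X e' = canon n T X e''"
    using canon_colim_gen[OF X] by (metis UnE converseD)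
  with step.IH show ?case by simp
qed simp

section \<open>Lifting through a terminal object\<close>

definition is_terminal :: "('o, 'm, 'e) cat_scheme \<Rightarrow> 'o \<Rightarrow> bool" where
  "is_terminal C t \<longleftrightarrow> t \<in> Ob C \<and> (\<forall>a\<in>Ob C. \<exists>!u. u \<in> Mor C \<and> Dom C u = a \<and> Cod C u = t)"

definition terminal_arrow :: "('o, 'm, 'e) cat_scheme \<Rightarrow> 'o \<Rightarrow> 'o \<Rightarrow> 'm" where
  "terminal_arrow C t a = (THE u. u \<in> Mor C \<and> Dom C u = a \<and> Cod C u = t)"

lemma has_terminal_iff: "has_terminal C \<longleftrightarrow> (\<exists>t. is_terminal C t)"
  unfolding has_terminal_def is_terminal_def by blast

lemma terminal_arrow:
  assumes "is_terminal C t" and "a \<in> Ob C"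
  shows "terminal_arrow C t a \<in> Mor C" "Dom C (terminal_arrow C t a) = a"
    "Cod C (terminal_arrow C t a) = t"
proof -
  have "\<exists>!u. u \<in> Mor C \<and> Dom C u = a \<and> Cod C u = t"
    using assms unfolding is_terminal_def by blast
  from theI'[OF this] show "terminal_arrow C t a \<in> Mor C" "Dom C (terminal_arrow C t a) = a"
    "Cod C (terminal_arrow C t a) = t" unfolding terminal_arrow_def by blast+
qed

lemma terminal_arrow_unique:
  assumes "is_terminal C t" and "a \<in> Ob C" and "u \<in> Mor C" "Dom C u = a" "Cod C u = t"
  shows "u = terminal_arrow C t a"
proof -
  have "\<exists>!u. u \<in> Mor C \<and> Dom C u = a \<and> Cod C u = t"
    using assms unfolding is_terminal_def by blast
  then show ?thesis
    unfolding terminal_arrow_def using assms(3-5) by (simp add: the1_equality)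
qed

text \<open>The lift of \<open>\<phi> : \<T> \<rightarrow> \<Delta>\<^sub>r\<^sub>e\<^sub>l X\<close> through \<open>\<Delta>\<^sub>r\<^sub>e\<^sub>l \<Delta>[p] \<rightarrow> \<Delta>\<^sub>r\<^sub>e\<^sub>l X\<close>, where
  \<open>\<phi>(t) = (p, x)\<close>: an object \<open>a\<close> goes to the operator of \<open>\<phi>(a \<rightarrow> t)\<close>, a simplex of \<open>\<Delta>[p]\<close>.\<close>

definition lift_ob :: "('o, 'm, 'e) cat_scheme \<Rightarrow> 'o \<Rightarrow> ('o \<Rightarrow> 'x dobj) \<times> ('m \<Rightarrow> 'x dmorph)
    \<Rightarrow> 'o \<Rightarrow> nat list list dobj" where
  "lift_ob T t \<phi> a =
     (if a \<in> Ob T then (fst (fst \<phi> a), snd (snd (snd \<phi> (terminal_arrow T t a)))) else undefined)"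

definition lift_mor :: "('o, 'm, 'e) cat_scheme \<Rightarrow> 'o \<Rightarrow> ('o \<Rightarrow> 'x dobj) \<times> ('m \<Rightarrow> 'x dmorph)
    \<Rightarrow> 'm \<Rightarrow> nat list list dmorph" where
  "lift_mor T t \<phi> f =
     (if f \<in> Mor T then (lift_ob T t \<phi> (Dom T f), lift_ob T t \<phi> (Cod T f), snd (snd (snd \<phi> f)))
      else undefined)"

definition terminal_lift :: "('o, 'm, 'e) cat_scheme \<Rightarrow> 'o \<Rightarrow> ('o \<Rightarrow> 'x dobj) \<times> ('m \<Rightarrow> 'x dmorph)
    \<Rightarrow> (nat list \<times> 'x) \<times> ('o \<Rightarrow> nat list list dobj) \<times> ('m \<Rightarrow> nat list list dmorph)" where
  "terminal_lift T t \<phi> = (fst \<phi> t, (lift_ob T t \<phi>, lift_mor T t \<phi>))"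

lemma lift_ob_fst:
  assumes "a \<in> Ob T"
  shows "fst (lift_ob T t \<phi> a) = fst (fst \<phi> a)"
  using assms by (simp add: lift_ob_def)

lemma lift_mor_eq:
  assumes "f \<in> Mor T"
  shows "lift_mor T t \<phi> f = (lift_ob T t \<phi> (Dom T f), lift_ob T t \<phi> (Cod T f), snd (snd (snd \<phi> f)))"
  using assms by (simp add: lift_mor_def)

context
  fixes n :: nat and T :: "('o, 'm, 'e) relcat_scheme" and t :: 'o and X :: "'x ssset"
    and Fo :: "'o \<Rightarrow> 'x dobj" and Fm :: "'m \<Rightarrow> 'x dmorph" and p :: "nat list" and x :: 'x
  assumes T: "is_relcat n T" and t: "is_terminal T t"
    and F: "(Fo, Fm) \<in> relmaps n T (delta_rel n X)" and F_t: "Fo t = (p, x)"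
begin

lemma lift_ob:
  assumes a: "a \<in> Ob T"
  shows "lift_ob T t (Fo, Fm) a \<in> Ob (delta_rel n (yoneda n p))"
    and "fst (drel_fun (\<lambda>q \<beta>. act X q p \<beta> x)) (lift_ob T t (Fo, Fm) a) = Fo a"
proof -
  let ?u = "terminal_arrow T t a"
  have u: "?u \<in> Mor T" "Dom T ?u = a" "Cod T ?u = t"
    using terminal_arrow[OF t a] by auto
  have "Fm ?u \<in> Mor (delta_rel n X)" "Fm ?u = (Fo a, (p, x), snd (snd (Fm ?u)))"
    using relmaps_Mor[OF F u(1)] relmaps_delta_rel_Mor_eq[OF F u(1)] by (simp_all add: u F_t)
  then have "((fst (Fo a), snd (Fo a)), (p, x), snd (snd (Fm ?u))) \<in> Mor (delta_rel n X)"
    by simp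
  then show "lift_ob T t (Fo, Fm) a \<in> Ob (delta_rel n (yoneda n p))"
    and "fst (drel_fun (\<lambda>q \<beta>. act X q p \<beta> x)) (lift_ob T t (Fo, Fm) a) = Fo a"
    unfolding delta_rel_Mor_iff using a
    by (simp_all add: lift_ob_def delta_rel_simps yoneda_simps drel_fun_apply)
qed

lemma terminal_arrow_operator_dcomp:
  assumes f: "f \<in> Mor T"
  shows "snd (snd (Fm (terminal_arrow T t (Dom T f)))) =
    dcomp (snd (snd (Fm (terminal_arrow T t (Cod T f))))) (snd (snd (Fm f)))"
proof -
  let ?u = "terminal_arrow T t"
  have ob: "Dom T f \<in> Ob T" "Cod T f \<in> Ob T" using relcat_Dom_Cod[OF T f] by auto
  note u_Cod = terminal_arrow[OF t ob(2)]
  have "Comp T (?u (Cod T f)) f = ?u (Dom T f)"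
    using relcat_Comp[OF T f u_Cod(1)] u_Cod by (intro terminal_arrow_unique[OF t ob(1)]) auto
  then have "Fm (?u (Dom T f)) = Comp (delta_rel n X) (Fm (?u (Cod T f))) (Fm f)"
    using relmaps_Comp[OF F f u_Cod(1)] u_Cod by simp
  then show ?thesis by (simp add: delta_rel_simps)
qed

lemma lift_mor_Mor:
  assumes f: "f \<in> Mor T"
  shows "lift_mor T t (Fo, Fm) f \<in> Mor (delta_rel n (yoneda n p))"
proof -
  have ob: "Dom T f \<in> Ob T" "Cod T f \<in> Ob T" using relcat_Dom_Cod[OF T f] by auto
  have "Fm f \<in> Mor (delta_rel n X)" "Fm f = (Fo (Dom T f), Fo (Cod T f), snd (snd (Fm f)))"
    using relmaps_Mor[OF F f] relmaps_delta_rel_Mor_eq[OF F f] by simp_all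
  then have "dmor n (fst (Fo (Dom T f))) (fst (Fo (Cod T f))) (snd (snd (Fm f)))"
    by (metis delta_rel_Mor_iff prod.collapse)
  then show ?thesis
    using lift_ob(1)[OF ob(1)] lift_ob(1)[OF ob(2)] terminal_arrow_operator_dcomp[OF f]
    by (auto simp: lift_mor_eq[OF f] lift_ob_def ob delta_rel_Mor_iff delta_rel_simps yoneda_simps)
qed

lemma lift_in_relmaps:
  "(lift_ob T t (Fo, Fm), lift_mor T t (Fo, Fm)) \<in> relmaps n T (delta_rel n (yoneda n p))"
  unfolding relmaps_def mem_Collect_eq prod.case
proof (intro conjI ballI allI impI)
  fix a assume a: "a \<in> Ob T"
  then show "lift_ob T t (Fo, Fm) a \<in> Ob (delta_rel n (yoneda n p))" by (rule lift_ob)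
  have "Id T a \<in> Mor T" "Dom T (Id T a) = a" "Cod T (Id T a) = a" using relcat_Id[OF T a] by auto
  then show "lift_mor T t (Fo, Fm) (Id T a) = Id (delta_rel n (yoneda n p)) (lift_ob T t (Fo, Fm) a)"
    using relmaps_Id[OF F a] by (simp add: lift_mor_eq lift_ob_fst[OF a] delta_rel_simps)
next
  fix f g assume fg: "f \<in> Mor T" "g \<in> Mor T" "Cod T f = Dom T g"
  then show "lift_mor T t (Fo, Fm) (Comp T g f) =
      Comp (delta_rel n (yoneda n p)) (lift_mor T t (Fo, Fm) g) (lift_mor T t (Fo, Fm) f)"
    using relcat_Comp[OF T fg] relmaps_Comp[OF F fg] by (simp add: lift_mor_eq delta_rel_simps)
next
  fix i f assume i: "i \<in> {1..n}" and f: "f \<in> V T i"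
  then have "f \<in> Mor T" using relcat_V_Mor[OF T] by blast
  then show "lift_mor T t (Fo, Fm) f \<in> V (delta_rel n (yoneda n p)) i"
    using relmaps_V[OF F i f] lift_mor_Mor relcat_Dom_Cod[OF T]
    by (simp add: delta_rel_V lift_mor_eq lift_ob_fst relmaps_delta_rel_endpoints[OF F])
next
  fix f assume f: "f \<in> W T"
  then have "f \<in> Mor T" using relcat_W_Mor[OF T] by blast
  then show "lift_mor T t (Fo, Fm) f \<in> W (delta_rel n (yoneda n p))"
    using relmaps_W[OF F f] lift_mor_Mor relcat_Dom_Cod[OF T]
    by (simp add: delta_rel_W lift_mor_eq lift_ob_fst relmaps_delta_rel_endpoints[OF F])
next
  fix f assume f: "f \<in> Mor T"
  show "lift_mor T t (Fo, Fm) f \<in> Mor (delta_rel n (yoneda n p))"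
    and "Dom (delta_rel n (yoneda n p)) (lift_mor T t (Fo, Fm) f) = lift_ob T t (Fo, Fm) (Dom T f)"
    and "Cod (delta_rel n (yoneda n p)) (lift_mor T t (Fo, Fm) f) = lift_ob T t (Fo, Fm) (Cod T f)"
    by (rule lift_mor_Mor[OF f]) (simp_all add: lift_mor_eq[OF f] delta_rel_simps)
qed (simp_all add: lift_ob_def lift_mor_def)

lemma terminal_lift_in_colim_elems: "terminal_lift T t (Fo, Fm) \<in> colim_elems n T X"
proof -
  have "t \<in> Ob T" using t by (simp add: is_terminal_def)
  then have "midx n p" "x \<in> Xs X p"
    using relmaps_Ob[OF F] F_t by (force simp: delta_rel_simps)+
  then show ?thesis
    using lift_in_relmaps by (simp add: terminal_lift_def F_t colim_elems_def)
qed

lemma canon_terminal_lift: "canon n T X (terminal_lift T t (Fo, Fm)) = (Fo, Fm)"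
proof -
  let ?G = "drel_fun (\<lambda>q \<beta>. act X q p \<beta> x)"
  have ob: "(if a \<in> Ob T then fst ?G (lift_ob T t (Fo, Fm) a) else undefined) = Fo a" for a
    using lift_ob(2) relmaps_Ob_undefined[OF F] by auto
  have "snd ?G (lift_mor T t (Fo, Fm) f) = Fm f" if f: "f \<in> Mor T" for f
  proof -
    have "snd ?G (lift_mor T t (Fo, Fm) f) = (Fo (Dom T f), Fo (Cod T f), snd (snd (Fm f)))"
      using relcat_Dom_Cod[OF T f] by (simp add: lift_mor_eq[OF f] drel_fun_apply(2) lift_ob(2))
    also have "\<dots> = Fm f" by (rule relmaps_delta_rel_Mor_eq[OF F f, symmetric])
    finally show ?thesis .
  qed
  then have mor: "(if f \<in> Mor T then snd ?G (lift_mor T t (Fo, Fm) f) else undefined) = Fm f" for f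
    using relmaps_Mor_undefined[OF F] by auto
  show ?thesis
    unfolding terminal_lift_def canon_def fcomp_def F_t fst_conv snd_conv prod.case ob mor ..
qed

end

lemma terminal_lift_fcomp_drel_fun:
  assumes t: "is_terminal T t"
  shows "terminal_lift T t (fcomp T (drel_fun g) \<phi>) = (fst (drel_fun g) (fst \<phi> t), snd (terminal_lift T t \<phi>))"
proof -
  have "t \<in> Ob T" using t by (simp add: is_terminal_def)
  moreover have "lift_ob T t (fcomp T (drel_fun g) \<phi>) = lift_ob T t \<phi>"
    using terminal_arrow(1)[OF t] by (auto simp: lift_ob_def fcomp_def drel_fun_apply)
  ultimately show ?thesis
    by (simp add: terminal_lift_def lift_mor_def fcomp_def drel_fun_apply fun_eq_iff)
qed

lemma terminal_lift_canon_colim_gen: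
  assumes T: "is_relcat n T" and t: "is_terminal T t" and X: "is_ssset n X"
    and e: "e \<in> colim_elems n T X"
  shows "(terminal_lift T t (canon n T X e), e) \<in> colim_gen n T X"
proof -
  obtain p x Fo Fm where e_eq: "e = ((p, x), (Fo, Fm))" by (metis prod.collapse)
  obtain q \<beta> where F_t: "Fo t = (q, \<beta>)" by fastforce
  have x: "x \<in> Xs X p" and F: "(Fo, Fm) \<in> relmaps n T (delta_rel n (yoneda n p))"
    using e by (simp_all add: e_eq colim_elems_def)
  have "t \<in> Ob T" using t by (simp add: is_terminal_def)
  then have \<beta>: "dmor n q p \<beta>"
    using relmaps_Ob[OF F] F_t by (force simp: delta_rel_simps yoneda_simps)
  let ?L = "snd (terminal_lift T t (Fo, Fm))"
  obtain Go Gm where G: "canon n T X e = (Go, Gm)" by fastforce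
  have "(Go, Gm) = fcomp T (drel_fun (\<lambda>q \<beta>. act X q p \<beta> x)) (Fo, Fm)"
    using G by (simp add: e_eq canon_def)
  then have lift_G: "terminal_lift T t (Go, Gm) = ((q, act X q p \<beta> x), ?L)"
    by (simp add: terminal_lift_fcomp_drel_fun[OF t] drel_fun_apply F_t)
  then have "Go t = (q, act X q p \<beta> x)" by (simp add: terminal_lift_def)
  then have "terminal_lift T t (Go, Gm) \<in> colim_elems n T X"
    using terminal_lift_in_colim_elems[OF T t canon_in_relmaps[OF T X e, unfolded G]] by blast
  moreover have "(Fo, Fm) = fcomp T (drel_fun (\<lambda>q' \<gamma>. dcomp \<beta> \<gamma>)) ?L"
    using canon_terminal_lift[OF T t F F_t]
    by (simp add: canon_def terminal_lift_def yoneda_simps F_t)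
  ultimately show ?thesis
    unfolding G lift_G using e \<beta> by (auto simp: e_eq colim_gen_def)
qed

theorem proposition6p2:
  fixes n :: nat
    and T :: "('o, 'm) relcat"
    and X :: "'x ssset"
  assumes "n \<ge> 1"
    and "is_relcat n T"
    and "is_poset_cat T"
    and "has_terminal T"
    and "is_ssset n X"
  shows "bij_betw (canon_colim n T X) (colim_set n T X) (relmaps n T (delta_rel n X))"
proof -
  note T = assms(2) and X = assms(5)
  obtain t where t: "is_terminal T t" using assms(4) by (auto simp: has_terminal_iff)
  have "equiv UNIV (colim_rel n T X)"
    unfolding colim_rel_def
    by (simp add: equiv_def refl_rtrancl sym_rtrancl sym_Un_converse trans_rtrancl)
  then show ?thesis
    unfolding canon_colim_def colim_set_def
  proof (rule bij_betw_quotient_by_section)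
    show "canon n T X e = canon n T X e'" if "(e, e') \<in> colim_rel n T X" for e e'
      using canon_colim_rel[OF X that] .
    show "canon n T X e \<in> relmaps n T (delta_rel n X)" if "e \<in> colim_elems n T X" for e
      using canon_in_relmaps[OF T X that] .
    show "terminal_lift T t \<phi> \<in> colim_elems n T X \<and> canon n T X (terminal_lift T t \<phi>) = \<phi>"
      if "\<phi> \<in> relmaps n T (delta_rel n X)" for \<phi>
      using terminal_lift_in_colim_elems[OF T t] canon_terminal_lift[OF T t] that
      by (metis prod.collapse)
    show "(e, terminal_lift T t (canon n T X e)) \<in> colim_rel n T X" if "e \<in> colim_elems n T X" for e
      using terminal_lift_canon_colim_gen[OF T t X that] unfolding colim_rel_def by blast
  qed
qed

end
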